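(* Let $f(x)=\sum_{n\ge 1} f_n \frac{x^n}{n!}$ be a formal power series over a field of characteristic zero with $f_1=1$, so that $f'(x)=1+\sum_{n\ge1}f_{n+1}\frac{x^n}{n!}$ and $f$ has a compositional inverse $\bar f(x)$ (i.e. $f(\bar f(x))=\bar f(f(x))=x$). Then the production matrix of the exponential Riordan array $[f'(x), f(x)]$ equals $U\cdot\left[\frac{1}{\bar f'(x)}, x\right]$, where $U=(u_{n,k})_{n,k\ge 0}$ is the shift matrix with $u_{n,k}=1$ if $k=n+1$ and $u_{n,k}=0$ otherwise. Equivalently, if $r_{n,k}=\frac{n!}{k!}[x^n]\frac{x^k}{\bar f'(x)}$ denotes the $(n,k)$-entry of $\left[\frac{1}{\bar f'(x)}, x\right]$, then the $(n,k)$-entry of the production matrix of $[f'(x),f(x)]$ is $r_{n+1,k}$ for all $n,k\ge 0$ (i.e. the production matrix is $\left[\frac{1}{\bar f'(x)}, x\right]$ with its first row removed).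
   Context: For power series $g(x)=1+\sum_{n\ge1} g_n\frac{x^n}{n!}$ and $f(x)=x+\sum_{n\ge 2} f_n\frac{x^n}{n!}$, the exponential Riordan array $[g(x),f(x)]$ is the infinite lower-triangular matrix $(t_{n,k})_{n,k\ge0}$ with $t_{n,k}=\frac{n!}{k!}[x^n]\,g(x)f(x)^k$, where $[x^n]$ extracts the coefficient of $x^n$; its bivariate generating function is $g(x)e^{yf(x)}=\sum_{n,k} t_{n,k}\frac{x^n}{n!}y^k$. The production matrix of $[g(x),f(x)]$ is the infinite matrix $(p_{n,k})_{n,k\ge0}$ defined by $\sum_{n,k\ge0} p_{n,k}\frac{x^n}{n!}y^k = e^{xy}\bigl(Z(x)+yA(x)\bigr)$ (exponential in $x$, ordinary in $y$), where $A(x)=f'(\bar f(x))$ and $Z(x)=\frac{g'(\bar f(x))}{g(\bar f(x))}$, with $\bar f$ the compositional inverse of $f$. *)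

theory Defs
  imports "HOL-Computational_Algebra.Formal_Power_Series"
begin

definition exp_riordan_entry :: "'a::field_char_0 fps \<Rightarrow> 'a fps \<Rightarrow> nat \<Rightarrow> nat \<Rightarrow> 'a" where
  "exp_riordan_entry g f n k = (fact n / fact k) * (fps_nth (g * f ^ k) n)"

definition riordan_A :: "'a::field_char_0 fps \<Rightarrow> 'a fps" where
  "riordan_A f = fps_deriv f oo fps_inv f"

definition riordan_Z :: "'a::field_char_0 fps \<Rightarrow> 'a fps \<Rightarrow> 'a fps" where
  "riordan_Z g f = (fps_deriv g oo fps_inv f) / (g oo fps_inv f)"

text \<open>Production matrix: p_{n,k} = n! [x^n y^k] e^{xy}(Z(x) + y A(x)).
  Since e^{xy} = sum_j x^j y^j / j!, the coefficient of x^n y^k is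
  sum_{j<=n, j=k} Z_{n-j}/j!  +  sum_{j<=n, j+1=k} A_{n-j}/j!  (Z_m, A_m ordinary coefficients).\<close>
definition production_entry :: "'a::field_char_0 fps \<Rightarrow> 'a fps \<Rightarrow> nat \<Rightarrow> nat \<Rightarrow> 'a" where
  "production_entry g f n k = fact n *
     ((\<Sum>j\<le>n. if j = k then fps_nth (riordan_Z g f) (n - j) / fact j else 0)
    + (\<Sum>j\<le>n. if j + 1 = k then fps_nth (riordan_A f) (n - j) / fact j else 0))"

end

theory Submission
  imports Defs
begin

unbundle fps_syntax

text \<open>Write \<open>h\<close> for the compositional inverse of \<open>f\<close>. Differentiating \<open>f(h(x)) = x\<close> gives
  \<open>f'(h) h' = 1\<close>, so \<open>A = f'(h) = 1/h'\<close>; differentiating \<open>A\<close> once more shows that for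
  \<open>g = f'\<close> the sequence \<open>Z = f''(h)/f'(h)\<close> is just \<open>A'\<close>. In a production matrix with
  \<open>Z = A'\<close>, writing \<open>m = n + 1 - k\<close>, entry \<open>(n,k)\<close> is \<open>n!/k! (m + k) [x^m] A\<close>
  \<open>= (n+1)!/k! [x^m] A\<close>, the entry \<open>(n+1,k)\<close> of the Riordan array \<open>[A, x]\<close>.\<close>

lemma deriv_compose_inv_mult_deriv_inv:
  fixes f :: "'a::field_char_0 fps"
  assumes "f $ 0 = 0" and "f $ 1 \<noteq> 0"
  shows "(fps_deriv f oo fps_inv f) * fps_deriv (fps_inv f) = 1"
proof -
  have "fps_inv f $ 0 = 0" by (simp add: fps_inv_def)
  then have "fps_deriv (f oo fps_inv f) = (fps_deriv f oo fps_inv f) * fps_deriv (fps_inv f)"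
    by (rule fps_compose_deriv)
  with fps_inv_right[OF assms] show ?thesis by simp
qed

lemma riordan_A_eq_inverse_deriv_inv:
  fixes f :: "'a::field_char_0 fps"
  assumes "f $ 0 = 0" and "f $ 1 \<noteq> 0"
  shows "riordan_A f = inverse (fps_deriv (fps_inv f))"
proof -
  have "fps_deriv (fps_inv f) * (fps_deriv f oo fps_inv f) = 1"
    using deriv_compose_inv_mult_deriv_inv[OF assms] by (metis mult.commute)
  then show ?thesis
    unfolding riordan_A_def by (metis fps_inverse_unique)
qed

lemma riordan_Z_deriv_eq_deriv_riordan_A:
  fixes f :: "'a::field_char_0 fps"
  assumes "f $ 0 = 0" and "f $ 1 \<noteq> 0"
  shows "riordan_Z (fps_deriv f) f = fps_deriv (riordan_A f)"
proof -
  define h where "h = fps_inv f"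
  define A where "A = riordan_A f"
  have A: "A = fps_deriv f oo h" unfolding A_def h_def riordan_A_def ..
  have Ah: "A * fps_deriv h = 1"
    using deriv_compose_inv_mult_deriv_inv[OF assms] unfolding A h_def .
  then have "A \<noteq> 0" by (metis mult_zero_left zero_neq_one)
  have "h $ 0 = 0" unfolding h_def by (simp add: fps_inv_def)
  then have "fps_deriv A = (fps_deriv (fps_deriv f) oo h) * fps_deriv h"
    unfolding A by (rule fps_compose_deriv)
  then have "fps_deriv A * A = fps_deriv (fps_deriv f) oo h"
    using Ah by (metis mult.assoc mult.commute mult_1_right)
  then have "(fps_deriv (fps_deriv f) oo h) / A = fps_deriv A"
    using \<open>A \<noteq> 0\<close> by (metis nonzero_mult_div_cancel_right)
  then show ?thesis
    unfolding riordan_Z_def h_def[symmetric] A[symmetric] A_def[symmetric] .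
qed

lemma production_entry_eq:
  "production_entry g f n k = fact n *
     ((if k \<le> n then riordan_Z g f $ (n - k) / fact k else 0)
      + (if 0 < k \<and> k \<le> Suc n then riordan_A f $ (Suc n - k) / fact (k - 1) else 0))"
proof -
  have "(\<Sum>j\<le>n. if j + 1 = k then riordan_A f $ (n - j) / fact j else 0)
      = (if 0 < k \<and> k \<le> Suc n then riordan_A f $ (Suc n - k) / fact (k - 1) else 0)"
  proof (cases k)
    case (Suc k')
    then have "(\<Sum>j\<le>n. if j + 1 = k then riordan_A f $ (n - j) / fact j else 0)
        = (\<Sum>j\<le>n. if j = k' then riordan_A f $ (n - j) / fact j else 0)"
      by (intro sum.cong) auto
    with Suc show ?thesis by simp
  qed simp
  then show ?thesis
    unfolding production_entry_def by simp
qed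

lemma exp_riordan_entry_X:
  "exp_riordan_entry g fps_X n k = (if k \<le> n then fact n / fact k * g $ (n - k) else 0)"
  unfolding exp_riordan_entry_def by (simp add: fps_X_power_mult_right_nth)

lemma production_entry_eq_exp_riordan_entry_Suc:
  fixes g f :: "'a::field_char_0 fps"
  assumes "riordan_Z g f = fps_deriv (riordan_A f)"
  shows "production_entry g f n k = exp_riordan_entry (riordan_A f) fps_X (Suc n) k"
proof (cases "k \<le> Suc n")
  case True
  define m where "m = Suc n - k"
  define a where "a = riordan_A f $ m"
  have "fact (Suc n) = (of_nat m + of_nat k) * (fact n :: 'a)"
    using True by (simp del: of_nat_Suc add: m_def of_nat_add[symmetric])
  then have "fact (Suc n) / fact k * a = fact n * (of_nat m * a / fact k + of_nat k * a / fact k)"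
    by (simp add: add_divide_distrib[symmetric] distrib_right[symmetric])
  also have "\<dots> = production_entry g f n k"
  proof (cases k)
    case 0
    then show ?thesis using True by (simp add: production_entry_eq assms m_def a_def)
  next
    case (Suc k')
    have "of_nat k * a / fact k = a / fact k'"
      using Suc by (simp del: of_nat_Suc)
    moreover have "of_nat m * a / fact k = (if k \<le> n then riordan_Z g f $ (n - k) / fact k else 0)"
      using True by (cases "k = Suc n") (auto simp: assms a_def m_def Suc_diff_le)
    ultimately show ?thesis
      using Suc True by (simp add: production_entry_eq a_def m_def)
  qed
  finally show ?thesis using True by (simp add: exp_riordan_entry_X a_def m_def)
next
  case False
  then show ?thesis by (simp add: production_entry_eq exp_riordan_entry_X)
qed

theorem mainTheorem1:
  fixes f :: "'a::field_char_0 fps"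
  assumes "fps_nth f 0 = 0" and "fps_nth f 1 = 1"
  shows "\<forall>n k. production_entry (fps_deriv f) f n k
           = exp_riordan_entry (inverse (fps_deriv (fps_inv f))) fps_X (Suc n) k"
proof -
  have f1: "f $ 1 \<noteq> 0" using assms(2) by simp
  show ?thesis
    using production_entry_eq_exp_riordan_entry_Suc
      [OF riordan_Z_deriv_eq_deriv_riordan_A[OF assms(1) f1]]
    by (simp add: riordan_A_eq_inverse_deriv_inv[OF assms(1) f1])
qed

end
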